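(* Let $A\subseteq\mathbb{N}$. Then there exists a subset $B\subseteq A$ such that $B\in\mathcal{D}$ and $d(B)=\underline{\underline{d}}(A)$. Similarly, there exists a superset $C\supseteq A$ such that $C\in\mathcal{D}$ and $d(C)=\overline{\overline{d}}(A)$.
   Context: $\mathbb{N}=\{1,2,3,\dots\}$. For $A\subseteq\mathbb{N}$ let $A(n)=|A\cap[1,n]|$. Let $\mathcal{D}$ be the collection of all $A\subseteq\mathbb{N}$ for which the asymptotic density $d(A)=\lim_{n\to\infty}\frac{A(n)}{n}$ exists. Define $\underline{\underline{d}}(A)=\sup\{d(B);\ B\subseteq A,\ B\in\mathcal{D}\}$ and $\overline{\overline{d}}(A)=\inf\{d(C);\ C\supseteq A,\ C\in\mathcal{D}\}$. *)

theory Defs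
  imports "HOL-Analysis.Analysis"
begin

text \<open>The paper's natural numbers are {1,2,3,...}; we model subsets of this as
  sets of type nat set contained in {1..}.\<close>

definition counting :: "nat set \<Rightarrow> nat \<Rightarrow> nat" where
  "counting A n = card (A \<inter> {1..n})"

definition has_density :: "nat set \<Rightarrow> real \<Rightarrow> bool" where
  "has_density A \<delta> \<longleftrightarrow> ((\<lambda>n. real (counting A n) / real n) \<longlongrightarrow> \<delta>) sequentially"

definition Dcal :: "nat set set" where
  "Dcal = {A. A \<subseteq> {1..} \<and> (\<exists>\<delta>. has_density A \<delta>)}"

definition density :: "nat set \<Rightarrow> real" where
  "density A = lim (\<lambda>n. real (counting A n) / real n)"

definition lower_dd :: "nat set \<Rightarrow> real" where
  "lower_dd A = Sup {density B | B. B \<subseteq> A \<and> B \<in> Dcal}"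

definition upper_dd :: "nat set \<Rightarrow> real" where
  "upper_dd A = Inf {density C | C. A \<subseteq> C \<and> C \<in> Dcal}"

end

theory Submission
  imports Defs
begin

text \<open>The supremum defining lower_dd A is a limit of densities d(S_k) of subsets
  S_k \<subseteq> A in \<D>. Choose block ends N_k growing so fast that each block (N_k, N_{k+1}]
  dwarfs everything before it, and let B agree with S_k on the k-th block. On the block
  (N_{k+1}, N_{k+2}] the counting function of B differs from a combination of those of S_k
  and S_{k+1} only by O(N_k) = o(n), so d(B) = lim d(S_k). The superset statement follows by
  passing to complements in {1..}.\<close>

lemma has_density_imp_density: "has_density A d \<Longrightarrow> density A = d"
  unfolding has_density_def density_def by (rule limI)

lemma Dcal_has_density: "A \<in> Dcal \<Longrightarrow> has_density A (density A)"
  unfolding Dcal_def using has_density_imp_density by auto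

lemma counting_le: "counting A n \<le> n"
  unfolding counting_def using card_mono[of "{1..n}" "A \<inter> {1..n}"] by simp

lemma counting_split:
  assumes "a \<le> b"
  shows "counting A b = counting A a + card (A \<inter> {a<..b})"
proof -
  have "A \<inter> {1..b} = (A \<inter> {1..a}) \<union> (A \<inter> {a<..b})" using assms by auto
  then show ?thesis unfolding counting_def by (simp add: card_Un_disjoint disjoint_iff)
qed

lemma has_density_le_1: "has_density A d \<Longrightarrow> d \<le> 1"
  unfolding has_density_def
  by (rule LIMSEQ_le_const2) (auto intro!: exI[of _ 1] simp: counting_le)

lemma has_density_complement:
  assumes "A \<subseteq> {1..}" "has_density A d"
  shows "has_density ({1..} - A) (1 - d)"
proof -
  have "counting ({1..} - A) n = n - counting A n" for n
  proof -
    have "({1..} - A) \<inter> {1..n} = {1..n} - A \<inter> {1..n}" by auto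
    then show ?thesis unfolding counting_def by (simp add: card_Diff_subset)
  qed
  then have "real (counting ({1..} - A) n) = real n - real (counting A n)" for n
    by (simp add: counting_le)
  then have "\<forall>\<^sub>F n in sequentially. 1 - real (counting A n) / n = real (counting ({1..} - A) n) / n"
    by (auto simp: eventually_sequentially field_simps intro!: exI[of _ 1])
  moreover have "(\<lambda>n. 1 - real (counting A n) / n) \<longlonglongrightarrow> 1 - d"
    using assms(2) unfolding has_density_def by (intro tendsto_intros)
  ultimately show ?thesis unfolding has_density_def by (rule Lim_transform_eventually[rotated])
qed

lemma Dcal_complement:
  assumes "A \<in> Dcal"
  shows "{1..} - A \<in> Dcal" and "density ({1..} - A) = 1 - density A"
  using has_density_complement[OF _ Dcal_has_density[OF assms]] assms
  by (auto simp: Dcal_def has_density_imp_density)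

lemma bdd_above_densities: "bdd_above {density B | B. B \<subseteq> A \<and> B \<in> Dcal}"
  using Dcal_has_density has_density_le_1 by (auto intro!: bdd_aboveI[of _ 1])

lemma density_le_lower_dd:
  assumes "B \<subseteq> A" "B \<in> Dcal"
  shows "density B \<le> lower_dd A"
  unfolding lower_dd_def using assms by (auto intro!: cSup_upper bdd_above_densities)

lemma has_density_eventually_close:
  assumes "has_density S d" "\<bar>d - s\<bar> < \<delta>"
  shows "\<forall>\<^sub>F m in sequentially. \<bar>real (counting S m) - s * m\<bar> \<le> \<delta> * m"
proof -
  have "(\<lambda>m. \<bar>real (counting S m) / m - s\<bar>) \<longlonglongrightarrow> \<bar>d - s\<bar>"
    using assms(1) unfolding has_density_def by (intro tendsto_intros)
  then have "\<forall>\<^sub>F m in sequentially. \<bar>real (counting S m) / m - s\<bar> < \<delta>"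
    using assms(2) by (rule order_tendstoD)
  then show ?thesis
  proof (rule eventually_mono)
    fix m :: nat
    assume close: "\<bar>real (counting S m) / m - s\<bar> < \<delta>"
    show "\<bar>real (counting S m) - s * m\<bar> \<le> \<delta> * m"
    proof (cases "m = 0")
      case False
      then have "\<bar>real (counting S m) - s * m\<bar> = m * \<bar>real (counting S m) / m - s\<bar>"
        by (simp add: abs_mult[symmetric] field_simps)
      also have "\<dots> \<le> \<delta> * m" using close by (metis less_imp_le mult.commute mult_right_mono of_nat_0_le_iff)
      finally show ?thesis .
    qed (simp add: counting_def)
  qed
qed

definition concat_blocks :: "(nat \<Rightarrow> nat) \<Rightarrow> (nat \<Rightarrow> nat set) \<Rightarrow> nat set" where
  "concat_blocks N S = {m. \<exists>j. m \<in> {N j<..N (Suc j)} \<and> m \<in> S j}"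

lemma block_index_unique:
  fixes N :: "nat \<Rightarrow> nat"
  assumes "strict_mono N" "m \<in> {N i<..N (Suc i)}" "m \<in> {N j<..N (Suc j)}"
  shows "i = j"
proof (rule ccontr)
  have later_block: "N (Suc a) < m" if "Suc a \<le> b" "m \<in> {N b<..N (Suc b)}" for a b
    using that strict_mono_less_eq[OF assms(1), of "Suc a" b] by auto
  assume "i \<noteq> j"
  then consider "Suc i \<le> j" | "Suc j \<le> i" by linarith
  then show False
    by cases (use assms(2,3) later_block in fastforce)+
qed

lemma concat_blocks_Int_block:
  assumes "strict_mono N"
  shows "concat_blocks N S \<inter> {N k<..N (Suc k)} = S k \<inter> {N k<..N (Suc k)}"
proof (intro equalityI subsetI)
  fix m
  assume m: "m \<in> concat_blocks N S \<inter> {N k<..N (Suc k)}"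
  then obtain j where "m \<in> {N j<..N (Suc j)}" "m \<in> S j"
    unfolding concat_blocks_def by blast
  moreover from this m have "j = k" using block_index_unique[OF assms] by blast
  ultimately show "m \<in> S k \<inter> {N k<..N (Suc k)}" by simp
qed (auto simp: concat_blocks_def)

lemma exists_block_containing:
  fixes N :: "nat \<Rightarrow> nat"
  assumes "strict_mono N" "N K < n"
  shows "\<exists>k\<ge>K. n \<in> {N k<..N (Suc k)}"
proof -
  define k where "k = Max {j. N j < n}"
  have "{j. N j < n} \<subseteq> {..<n}"
    using strict_mono_imp_increasing[OF assms(1)] by (auto intro: le_less_trans)
  then have fin: "finite {j. N j < n}" by (rule finite_subset) simp
  have "K \<le> k" "N k < n"
    using Max_ge[OF fin] Max_in[OF fin] assms(2) unfolding k_def by auto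
  moreover have "n \<le> N (Suc k)"
    using Max_ge[OF fin, of "Suc k"] unfolding k_def by fastforce
  ultimately show ?thesis by auto
qed

lemma counting_concat_blocks:
  assumes "strict_mono N" "N (Suc k) \<le> n" "n \<le> N (Suc (Suc k))"
  shows "real (counting (concat_blocks N S) n)
    = real (counting (concat_blocks N S) (N k)) - real (counting (S k) (N k))
      + real (counting (S k) (N (Suc k)))
      + real (counting (S (Suc k)) n) - real (counting (S (Suc k)) (N (Suc k)))"
proof -
  let ?B = "concat_blocks N S"
  have mono: "N k \<le> N (Suc k)" using assms(1) by (simp add: strict_mono_less_eq)
  have "{N (Suc k)<..n} \<subseteq> {N (Suc k)<..N (Suc (Suc k))}" using assms(3) by auto
  then have "?B \<inter> {N (Suc k)<..n} = S (Suc k) \<inter> {N (Suc k)<..n}"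
    using concat_blocks_Int_block[OF assms(1), of S "Suc k"] by blast
  then have "counting ?B n = counting ?B (N (Suc k)) + card (S (Suc k) \<inter> {N (Suc k)<..n})"
    using counting_split[OF assms(2)] by simp
  moreover have "counting ?B (N (Suc k)) = counting ?B (N k) + card (S k \<inter> {N k<..N (Suc k)})"
    using counting_split[OF mono] concat_blocks_Int_block[OF assms(1)] by simp
  moreover note counting_split[OF mono, of "S k"] counting_split[OF assms(2), of "S (Suc k)"]
  ultimately have "counting ?B n + counting (S k) (N k) + counting (S (Suc k)) (N (Suc k))
      = counting ?B (N k) + counting (S k) (N (Suc k)) + counting (S (Suc k)) n"
    by linarith
  then have "real (counting ?B n + counting (S k) (N k) + counting (S (Suc k)) (N (Suc k)))
      = real (counting ?B (N k) + counting (S k) (N (Suc k)) + counting (S (Suc k)) n)"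
    by (simp only:)
  then show ?thesis by (simp only: of_nat_add)
qed

lemma has_density_blockwise:
  fixes N :: "nat \<Rightarrow> nat" and \<epsilon> :: "nat \<Rightarrow> real" and s :: real
  assumes "strict_mono N" "\<epsilon> \<longlonglongrightarrow> 0"
    and close: "\<And>k n. n \<in> {N (Suc k)<..N (Suc (Suc k))} \<Longrightarrow>
      \<bar>real (counting B n) - s * n\<bar> \<le> \<epsilon> k * n"
  shows "has_density B s"
  unfolding has_density_def
proof (rule LIMSEQ_I)
  fix r :: real
  assume "0 < r"
  then obtain K where "\<forall>k\<ge>K. norm (\<epsilon> k - 0) < r"
    using LIMSEQ_D[OF assms(2)] by blast
  then have K: "\<And>k. k \<ge> K \<Longrightarrow> \<epsilon> k < r" by auto
  show "\<exists>n0. \<forall>n\<ge>n0. norm (real (counting B n) / real n - s) < r"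
  proof (intro exI allI impI)
    fix n
    assume "n \<ge> Suc (N (Suc K))"
    then obtain j where "Suc K \<le> j" "n \<in> {N j<..N (Suc j)}"
      using exists_block_containing[OF assms(1), of "Suc K" n] by auto
    then obtain k where "K \<le> k" and n: "n \<in> {N (Suc k)<..N (Suc (Suc k))}"
      by (metis Suc_le_D Suc_le_mono)
    then have "0 < real n" by auto
    have "\<bar>real (counting B n) - s * n\<bar> \<le> \<epsilon> k * n" by (rule close[OF n])
    also have "\<dots> < r * n" using K[OF \<open>K \<le> k\<close>] \<open>0 < real n\<close> by (rule mult_strict_right_mono)
    finally have "\<bar>real (counting B n) - s * n\<bar> < r * n" .
    then show "norm (real (counting B n) / real n - s) < r"
      using \<open>0 < real n\<close> by (simp add: field_simps)
  qed
qed

lemma exists_subset_with_limit_density: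
  assumes dens: "\<And>k. has_density (S k) (d k)" and lim: "d \<longlonglongrightarrow> s"
  shows "\<exists>B \<subseteq> (\<Union>k. S k). has_density B s"
proof -
  txt \<open>Block k+1 of the spliced set is governed by S k and S (k+1), hence both distances
    enter \<epsilon> k; the term 1/(k+1) keeps \<epsilon> k positive and bounds the relative size of
    everything before block k.\<close>
  define \<epsilon> where "\<epsilon> = (\<lambda>k. \<bar>d k - s\<bar> + \<bar>d (Suc k) - s\<bar> + inverse (real (Suc k)))"
  have "(\<lambda>k. d k - s) \<longlonglongrightarrow> 0" "(\<lambda>k. d (Suc k) - s) \<longlonglongrightarrow> 0"
    using LIM_zero[OF lim] LIM_zero[OF lim[THEN LIMSEQ_Suc]] by auto
  then have "\<epsilon> \<longlonglongrightarrow> 0 + 0 + 0"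
    unfolding \<epsilon>_def by (intro tendsto_add tendsto_rabs_zero LIMSEQ_inverse_real_of_nat)
  from tendsto_mult[OF tendsto_const[of 4] this]
  have \<epsilon>_lim: "(\<lambda>k. 4 * \<epsilon> k) \<longlonglongrightarrow> 0" by simp
  define good where "good k b \<longleftrightarrow> (\<forall>m\<ge>b.
      \<bar>real (counting (S k) m) - s * m\<bar> \<le> \<epsilon> k * m \<and>
      \<bar>real (counting (S (Suc k)) m) - s * m\<bar> \<le> \<epsilon> k * m)" for k b
  have "\<exists>b. Suc k * a < b \<and> good k b" for k a
  proof -
    have "\<bar>d k - s\<bar> < \<epsilon> k" "\<bar>d (Suc k) - s\<bar> < \<epsilon> k"
      by (auto simp: \<epsilon>_def intro!: add_nonneg_pos)
    then have "\<forall>\<^sub>F m in sequentially.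
        \<bar>real (counting (S k) m) - s * m\<bar> \<le> \<epsilon> k * m \<and>
        \<bar>real (counting (S (Suc k)) m) - s * m\<bar> \<le> \<epsilon> k * m"
      by (intro eventually_conj has_density_eventually_close[OF dens])
    then obtain M where "good k M" unfolding good_def eventually_sequentially by blast
    then have "good k (max M (Suc (Suc k * a)))" unfolding good_def by simp
    then show ?thesis by (intro exI[of _ "max M (Suc (Suc k * a))"]) simp
  qed
  then obtain N where grow: "\<And>k. Suc k * N k < N (Suc k)" and good: "\<And>k. good k (N (Suc k))"
    using dependent_nat_choice[of "\<lambda>_ _. True" "\<lambda>k a b. Suc k * a < b \<and> good k b"] by blast
  have "strict_mono N"
    unfolding strict_mono_Suc_iff
  proof
    fix k
    have "N k \<le> Suc k * N k" by simp
    with grow[of k] show "N k < N (Suc k)" by linarith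
  qed
  let ?B = "concat_blocks N S"
  have estimate: "\<bar>real (counting ?B n) - s * n\<bar> \<le> 4 * \<epsilon> k * n"
    if n: "n \<in> {N (Suc k)<..N (Suc (Suc k))}" for k n
  proof -
    have "real (Suc k * N k) \<le> real (N (Suc k))" using grow[of k] by linarith
    then have "real (N k) \<le> inverse (real (Suc k)) * N (Suc k)" by (simp add: field_simps)
    also have "\<dots> \<le> \<epsilon> k * N (Suc k)" by (intro mult_right_mono) (auto simp: \<epsilon>_def)
    also have "\<dots> \<le> \<epsilon> k * n" using n by (intro mult_left_mono) (auto simp: \<epsilon>_def)
    finally have small: "real (N k) \<le> \<epsilon> k * n" .
    have "\<epsilon> k * N (Suc k) \<le> \<epsilon> k * n" using n by (intro mult_left_mono) (auto simp: \<epsilon>_def)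
    txt \<open>The counts up to N k enter only through terms in [0, N k], which \<open>small\<close> absorbs.\<close>
    moreover note counting_concat_blocks[OF \<open>strict_mono N\<close>, of k n S] n small
      good[of k, unfolded good_def, rule_format, of "N (Suc k)"]
      good[of k, unfolded good_def, rule_format, of n]
      counting_le[of ?B "N k"] counting_le[of "S k" "N k"]
    ultimately show ?thesis unfolding abs_le_iff by auto
  qed
  have "has_density ?B s"
    by (rule has_density_blockwise[OF \<open>strict_mono N\<close> \<epsilon>_lim estimate])
  moreover have "?B \<subseteq> (\<Union>k. S k)" unfolding concat_blocks_def by blast
  ultimately show ?thesis by blast
qed

lemma lower_dd_attained:
  assumes "A \<subseteq> {1..}"
  shows "\<exists>B. B \<subseteq> A \<and> B \<in> Dcal \<and> density B = lower_dd A"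
proof -
  let ?X = "{density B | B. B \<subseteq> A \<and> B \<in> Dcal}"
  have "has_density {} 0" by (simp add: has_density_def counting_def)
  then have "{} \<in> Dcal" unfolding Dcal_def by blast
  then have "?X \<noteq> {}" by blast
  moreover note bdd_above_densities
  ultimately have "lower_dd A \<in> closure ?X"
    unfolding lower_dd_def by (rule closure_contains_Sup)
  then obtain f where X: "\<And>k. f k \<in> ?X" and f: "f \<longlonglongrightarrow> lower_dd A"
    unfolding closure_sequential by blast
  have "\<exists>B. B \<subseteq> A \<and> B \<in> Dcal \<and> density B = f k" for k
    using X[of k] by auto
  then obtain S where S: "\<And>k. S k \<subseteq> A \<and> S k \<in> Dcal \<and> density (S k) = f k" by metis
  have "has_density (S k) (f k)" for k using Dcal_has_density[of "S k"] S[of k] by simp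
  then obtain B where "B \<subseteq> (\<Union>k. S k)" and B: "has_density B (lower_dd A)"
    using exists_subset_with_limit_density[OF _ f] by blast
  then have "B \<subseteq> A" using S by blast
  moreover from this B assms have "B \<in> Dcal" unfolding Dcal_def by blast
  ultimately show ?thesis using has_density_imp_density[OF B] by blast
qed

lemma upper_dd_attained:
  assumes "A \<subseteq> {1..}"
  shows "\<exists>C. A \<subseteq> C \<and> C \<in> Dcal \<and> density C = upper_dd A"
proof -
  obtain B where B: "B \<subseteq> {1..} - A" "B \<in> Dcal" "density B = lower_dd ({1..} - A)"
    using lower_dd_attained[of "{1..} - A"] by auto
  define C where "C = {1..} - B"
  have "B \<subseteq> {1..}" using B(2) by (simp add: Dcal_def)
  then have "C \<in> Dcal" "density C = 1 - density B" and "A \<subseteq> C"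
    using Dcal_complement[OF B(2)] B(1) assms by (auto simp: C_def)
  have "upper_dd A = density C"
    unfolding upper_dd_def
  proof (rule cInf_eq_minimum)
    show "density C \<in> {density C | C. A \<subseteq> C \<and> C \<in> Dcal}"
      using \<open>A \<subseteq> C\<close> \<open>C \<in> Dcal\<close> by blast
  next
    fix y
    assume "y \<in> {density C | C. A \<subseteq> C \<and> C \<in> Dcal}"
    then obtain C' where C': "y = density C'" "A \<subseteq> C'" "C' \<in> Dcal" by blast
    have "{1..} - C' \<subseteq> {1..} - A" using C'(2) by blast
    then have "density ({1..} - C') \<le> density B"
      using B(3) Dcal_complement(1)[OF C'(3)] by (simp add: density_le_lower_dd)
    then show "density C \<le> y"
      using Dcal_complement(2)[OF C'(3)] \<open>density C = 1 - density B\<close> C'(1) by simp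
  qed
  then show ?thesis using \<open>A \<subseteq> C\<close> \<open>C \<in> Dcal\<close> by auto
qed

theorem lemma3p7:
  fixes A :: "nat set"
  assumes "A \<subseteq> {1..}"
  shows "(\<exists>B. B \<subseteq> A \<and> B \<in> Dcal \<and> density B = lower_dd A)
       \<and> (\<exists>C. A \<subseteq> C \<and> C \<in> Dcal \<and> density C = upper_dd A)"
  using lower_dd_attained[OF assms] upper_dd_attained[OF assms] by blast

end
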